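(* Let $\mathcal{A}=\mathbb{C}[x,y]$ and consider the complex $0\to\mathcal{A}\xrightarrow{d^0}\mathcal{A}\times\mathcal{A}\xrightarrow{d^1}\mathcal{A}\to0$ with $d^0(f)=(x\partial_yf,\,-x^2\partial_xf)$ and $d^1(f_1,f_2)=x\partial_yf_2+x^2\partial_xf_1-xf_1$ (the logarithmic Poisson complex of the bracket $\{x,y\}=x^2$ along $x^2\mathcal{A}$). Its cohomology satisfies $H^0_{PS}\cong\mathbb{C}$, $H^1_{PS}\cong\mathbb{C}[y]\oplus\mathbb{C}_1[x]$, $H^2_{PS}\cong\mathbb{C}[y]$, where $\mathbb{C}_1[x]=\{a_0+a_1x:\ a_0,a_1\in\mathbb{C}\}$. *)

theory Defs
  imports "HOL-Computational_Algebra.Polynomial" "HOL-Library.Product_Plus"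
begin

text \<open>C[x,y] is represented as complex poly poly: polynomials in y whose
coefficients are polynomials in x.\<close>
type_synonym cxy = "complex poly poly"

definition Xv :: cxy where "Xv = [:[:0, 1:]:]"

definition dX :: "cxy \<Rightarrow> cxy" where "dX f = map_poly pderiv f"
definition dY :: "cxy \<Rightarrow> cxy" where "dY f = pderiv f"

definition d0 :: "cxy \<Rightarrow> cxy \<times> cxy" where
  "d0 f = (Xv * dY f, - (Xv ^ 2 * dX f))"

definition d1 :: "cxy \<times> cxy \<Rightarrow> cxy" where
  "d1 p = Xv * dY (snd p) + Xv ^ 2 * dX (fst p) - Xv * fst p"

definition scA :: "complex \<Rightarrow> cxy \<Rightarrow> cxy" where "scA c f = smult [:c:] f"
definition scA2 :: "complex \<Rightarrow> cxy \<times> cxy \<Rightarrow> cxy \<times> cxy" where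
  "scA2 c p = (scA c (fst p), scA c (snd p))"
definition scP2 :: "complex \<Rightarrow> complex poly \<times> complex poly \<Rightarrow> complex poly \<times> complex poly" where
  "scP2 c p = (smult c (fst p), smult c (snd p))"

text \<open>Cohomology Z/B is C-linearly isomorphic to W: there is a C-linear map on the
cocycles Z onto W whose kernel is exactly the coboundaries B (first isomorphism theorem).\<close>
definition cohom_iso ::
  "(complex \<Rightarrow> 'a::{plus,zero} \<Rightarrow> 'a) \<Rightarrow> (complex \<Rightarrow> 'b::{plus,zero} \<Rightarrow> 'b)
    \<Rightarrow> 'a set \<Rightarrow> 'a set \<Rightarrow> 'b set \<Rightarrow> bool" where
  "cohom_iso sa sb Z B W \<longleftrightarrow> (\<exists>\<phi>.
      (\<forall>u\<in>Z. \<forall>v\<in>Z. \<phi> (u + v) = \<phi> u + \<phi> v) \<and>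
      (\<forall>c. \<forall>u\<in>Z. \<phi> (sa c u) = sb c (\<phi> u)) \<and>
      \<phi> ` Z = W \<and> {z\<in>Z. \<phi> z = 0} = B)"

end

theory Submission
  imports Defs
begin

(* The complex  0 -> A --d0--> A x A --d1--> A -> 0  over A = C[x,y] is computed
   by exhibiting, in each degree, an explicit C-linear "class map" on the cocycles
   whose image is the claimed cohomology group and whose kernel is the coboundaries.

   - H^0: d0 f = 0 forces dY f = 0 and dX f = 0, so the cocycles are the constants;
     the class map reads off the constant.
   - H^2: every d1 (f,q) is divisible by x, and conversely x*g = d1 (0, G) for any
     y-antiderivative G of g; so the class map is evaluation at x = 0, onto C[y].
   - H^1: the class of a cocycle (f,q) is (f at x = 0, the part of degree <= 1 in x of
     the y-constant term of q).  Every such pair is reached by a cocycle built with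
     a y-antiderivative, and a cocycle of class 0 is d0 h, where h is obtained from a
     y-antiderivative of f/x corrected by an x-antiderivative. *)

abbreviation X :: "'a::comm_semiring_1 poly" where "X \<equiv> [:0, 1:]"

lemma const_coeff_eq_0_iff:
  fixes c :: "'a::comm_semiring_1 poly"
  shows "coeff c 0 = 0 \<longleftrightarrow> (\<exists>d. c = X * d)"
proof
  assume "coeff c 0 = 0"
  then have "c = pCons 0 (poly_shift 1 c)"
    by (intro poly_eqI) (simp add: coeff_pCons coeff_poly_shift split: nat.split)
  then show "\<exists>d. c = X * d" by (intro exI[of _ "poly_shift 1 c"]) simp
qed auto

lemma low_coeffs_eq_0_iff:
  fixes c :: "'a::comm_semiring_1 poly"
  shows "coeff c 0 = 0 \<and> coeff c 1 = 0 \<longleftrightarrow> (\<exists>s. c = X^2 * s)"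
proof
  assume c: "coeff c 0 = 0 \<and> coeff c 1 = 0"
  then obtain d where d: "c = X * d" using const_coeff_eq_0_iff by blast
  with c have "coeff d 0 = 0" by simp
  then obtain s where "d = X * s" using const_coeff_eq_0_iff by blast
  with d show "\<exists>s. c = X^2 * s" by (auto simp: power2_eq_square mult.assoc)
qed (auto simp: power2_eq_square)

lemma inner_const_coeffs_eq_0_iff:
  fixes f :: "'a::comm_semiring_1 poly poly"
  shows "(\<forall>j. coeff (coeff f j) 0 = 0) \<longleftrightarrow> (\<exists>g. f = smult X g)"
proof
  assume "\<forall>j. coeff (coeff f j) 0 = 0"
  then have "f = smult X (map_poly (poly_shift 1) f)"
    by (intro poly_eqI) (auto simp: coeff_map_poly poly_eq_iff coeff_poly_shift coeff_pCons split: nat.split)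
  then show "\<exists>g. f = smult X g" by blast
qed auto

(* The formal antiderivative with constant term 0.  It is stated over any char-0
   domain with division; it is a right inverse of pderiv as soon as positive integers
   are units, which covers both C (integrating in x) and C[x] (integrating in y). *)
definition antideriv :: "'a::{semidom_divide,semiring_char_0} poly \<Rightarrow> 'a poly" where
  "antideriv p = Poly (0 # map (\<lambda>k. coeff p k div of_nat (Suc k)) [0..<Suc (degree p)])"

lemma coeff_antideriv_0 [simp]: "coeff (antideriv p) 0 = 0"
  by (simp add: antideriv_def)

lemma coeff_antideriv_Suc: "coeff (antideriv p) (Suc k) = coeff p k div of_nat (Suc k)"
  by (cases "k \<le> degree p") (auto simp: antideriv_def nth_default_def coeff_eq_0 simp del: upt_Suc)

lemma pderiv_antideriv:
  fixes p :: "'a::{semidom_divide,semiring_char_0} poly"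
  assumes "\<And>n. of_nat (Suc n) dvd (1::'a)"
  shows "pderiv (antideriv p) = p"
proof (rule poly_eqI)
  fix n
  obtain k where k: "coeff p n = of_nat (Suc n) * k"
    using dvd_trans[OF assms[of n] one_dvd[of "coeff p n"]] by (elim dvdE)
  then show "coeff (pderiv (antideriv p)) n = coeff p n"
    by (simp add: coeff_pderiv coeff_antideriv_Suc del: of_nat_Suc)
qed

lemma of_nat_Suc_dvd_one_complex: "of_nat (Suc n) dvd (1::complex)"
  by (simp add: dvd_field_iff del: of_nat_Suc)

lemma of_nat_Suc_dvd_one_complex_poly: "of_nat (Suc n) dvd (1::complex poly)"
  by (simp add: of_nat_poly is_unit_const_poly_iff dvd_field_iff del: of_nat_Suc)

(* The differentials written with scalar multiplication by x; both d0 and d1 are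
   then visibly divisible by x. *)
lemma d0_eq: "d0 h = (smult X (dY h), - smult (X^2) (dX h))"
  by (simp add: d0_def Xv_def power2_eq_square)

lemma d1_eq: "d1 (f, q) = smult X (dY q + smult X (dX f) - f)"
  by (simp add: d1_def Xv_def power2_eq_square smult_add_right smult_diff_right)

lemma dY_add: "dY (f + g) = dY f + dY g"
  by (simp add: dY_def pderiv_add)

lemma dY_diff: "dY (f - g) = dY f - dY g"
  by (simp add: dY_def pderiv_diff)

lemma dY_smult: "dY (smult a f) = smult a (dY f)"
  by (simp add: dY_def pderiv_smult)

lemma dY_const: "dY [:a:] = 0"
  by (simp add: dY_def pderiv_pCons)

lemma dX_diff: "dX (f - g) = dX f - dX g"
  by (simp add: dX_def poly_eq_iff coeff_map_poly pderiv_diff)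

lemma dX_smult: "dX (smult a f) = smult (pderiv a) f + smult a (dX f)"
  by (simp add: dX_def poly_eq_iff coeff_map_poly pderiv_mult algebra_simps)

lemma dX_const: "dX [:a:] = [:pderiv a:]"
  by (simp add: dX_def poly_eq_iff coeff_map_poly coeff_pCons split: nat.splits)

lemma coeff_dX: "coeff (dX f) n = pderiv (coeff f n)"
  by (simp add: dX_def coeff_map_poly)

lemma dX_dY: "dX (dY h) = dY (dX h)"
  by (simp add: dX_def dY_def poly_eq_iff coeff_map_poly coeff_pderiv pderiv_mult of_nat_poly)

lemma dY_antideriv: "dY (antideriv f) = f"
  by (simp add: dY_def pderiv_antideriv[OF of_nat_Suc_dvd_one_complex_poly])

lemma pderiv_antideriv_complex: "pderiv (antideriv p) = (p :: complex poly)"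
  by (rule pderiv_antideriv[OF of_nat_Suc_dvd_one_complex])

lemma y_constant: "dY f = 0 \<Longrightarrow> f = [:coeff f 0:]"
  by (metis dY_def degree_0_id pderiv_eq_0_iff)

lemma d1_d0: "d1 (d0 h) = 0"
proof -
  have "dX (smult X (dY h)) = dY h + smult X (dY (dX h))"
    by (simp add: dX_smult pderiv_pCons dX_dY one_pCons[symmetric])
  then show ?thesis
    by (simp add: d0_eq d1_eq dY_def pderiv_minus pderiv_smult dX_dY power2_eq_square
        smult_add_right)
qed

(* Since x is not a zero divisor, the cocycle condition in degree 1 drops the factor x. *)
lemma cocycle_iff: "d1 (f, q) = 0 \<longleftrightarrow> dY q = f - smult X (dX f)"
  by (auto simp: d1_eq algebra_simps)

lemma d0_kernel: "{f. d0 f = 0} = range (\<lambda>c. [:[:c:]:])"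
proof (intro set_eqI iffI)
  fix f assume "f \<in> {f. d0 f = 0}"
  then have "dY f = 0" "dX f = 0" by (auto simp: d0_eq zero_prod_def)
  then have "f = [:coeff f 0:]" "pderiv (coeff f 0) = 0"
    using y_constant coeff_dX[of f 0] by auto
  then have "f = [:[:coeff (coeff f 0) 0:]:]"
    by (metis degree_0_id pderiv_eq_0_iff)
  then show "f \<in> range (\<lambda>c. [:[:c:]:])" by blast
qed (auto simp: d0_eq dY_def dX_const zero_prod_def)

definition at_x0 :: "cxy \<Rightarrow> complex poly" where
  "at_x0 f = map_poly (\<lambda>c. coeff c 0) f"

definition lift_y :: "complex poly \<Rightarrow> cxy" where
  "lift_y p = map_poly (\<lambda>c. [:c:]) p"

lemma coeff_at_x0: "coeff (at_x0 f) n = coeff (coeff f n) 0"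
  by (simp add: at_x0_def coeff_map_poly)

lemma at_x0_add: "at_x0 (f + g) = at_x0 f + at_x0 g"
  by (simp add: poly_eq_iff coeff_at_x0)

lemma at_x0_smult_const: "at_x0 (smult [:c:] f) = smult c (at_x0 f)"
  by (simp add: poly_eq_iff coeff_at_x0)

lemma at_x0_lift_y: "at_x0 (lift_y p) = p"
  by (simp add: poly_eq_iff coeff_at_x0 lift_y_def coeff_map_poly)

lemma dX_lift_y: "dX (lift_y p) = 0"
  by (simp add: poly_eq_iff coeff_dX lift_y_def coeff_map_poly)

lemma at_x0_eq_0_iff: "at_x0 f = 0 \<longleftrightarrow> (\<exists>g. f = smult X g)"
  unfolding inner_const_coeffs_eq_0_iff[symmetric] by (simp add: poly_eq_iff coeff_at_x0)

(* Degree 2: the image of d1 is exactly the multiples of x, i.e. the kernel of evaluation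
   at x = 0; a multiple x g is hit by (0, G) with G a y-antiderivative of g. *)
lemma d1_image: "range d1 = {z. at_x0 z = 0}"
proof (intro set_eqI iffI)
  fix z assume "z \<in> {z. at_x0 z = 0}"
  then obtain g where "z = smult X g" by (auto simp: at_x0_eq_0_iff)
  then have "z = d1 (0, antideriv g)"
    by (simp add: d1_eq dY_antideriv dX_def)
  then show "z \<in> range d1" by blast
qed (auto simp: d1_eq at_x0_eq_0_iff)

definition lin_part :: "'a::zero poly \<Rightarrow> 'a poly" where
  "lin_part c = [:coeff c 0, coeff c 1:]"

lemma degree_lin_part: "degree (lin_part c) \<le> 1"
  by (simp add: lin_part_def)

lemma lin_part_id: "degree c \<le> 1 \<Longrightarrow> lin_part c = c"
  by (rule poly_eqI) (auto simp: lin_part_def coeff_pCons coeff_eq_0 split: nat.split)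

lemma lin_part_eq_0_iff: "lin_part c = 0 \<longleftrightarrow> (\<exists>s. c = X^2 * s)"
  for c :: "'a::comm_semiring_1 poly"
  by (simp add: lin_part_def flip: low_coeffs_eq_0_iff)

definition h1_class :: "cxy \<times> cxy \<Rightarrow> complex poly \<times> complex poly" where
  "h1_class p = (at_x0 (fst p), lin_part (coeff (snd p) 0))"

lemma h1_class_add: "h1_class (u + v) = h1_class u + h1_class v"
  by (simp add: h1_class_def at_x0_add lin_part_def)

lemma h1_class_scA2: "h1_class (scA2 c u) = scP2 c (h1_class u)"
  by (simp add: h1_class_def at_x0_smult_const scA2_def scP2_def lin_part_def scA_def)

lemma h1_class_d0: "h1_class (d0 h) = 0"
  by (auto simp: h1_class_def d0_eq at_x0_eq_0_iff lin_part_eq_0_iff zero_prod_def coeff_dX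
      intro!: exI[of _ "- pderiv (coeff h 0)"])

(* Every pair (p, r) with deg r <= 1 is the class of the cocycle (p, r + integral of p dy). *)
lemma h1_class_cocycles: "h1_class ` {p. d1 p = 0} = {(p, q). degree q \<le> 1}"
proof (intro set_eqI iffI)
  fix w :: "complex poly \<times> complex poly"
  assume "w \<in> {(p, q). degree q \<le> 1}"
  then obtain p r where w: "w = (p, r)" and r: "degree r \<le> 1" by auto
  define Q where "Q = [:r:] + antideriv (lift_y p)"
  have "dY Q = lift_y p" by (simp add: Q_def dY_add dY_const dY_antideriv)
  then have "d1 (lift_y p, Q) = 0" by (simp add: cocycle_iff dX_lift_y)
  moreover have "h1_class (lift_y p, Q) = w"
    by (simp add: h1_class_def Q_def at_x0_lift_y lin_part_id[OF r] w)
  ultimately show "w \<in> h1_class ` {p. d1 p = 0}" by force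
qed (use degree_lin_part in \<open>auto simp: h1_class_def\<close>)

(* The heart of the computation of H^1.  Write f = x g and let H be a y-antiderivative of g,
   so that d0 H has first component f.  The cocycle condition makes q + x^2 dX H
   independent of y; its value is the y-constant term of q, a multiple x^2 s since the
   class vanishes.  Subtracting an x-antiderivative of s from H repairs the second
   component. *)
lemma zero_class_cocycle_is_coboundary:
  assumes cocycle: "d1 (f, q) = 0" and zero_class: "h1_class (f, q) = 0"
  shows "(f, q) \<in> range d0"
proof -
  from zero_class have "at_x0 f = 0" "lin_part (coeff q 0) = 0"
    by (simp_all add: h1_class_def zero_prod_def)
  then obtain g s where f: "f = smult X g" and s: "coeff q 0 = X^2 * s"
    by (auto simp: at_x0_eq_0_iff lin_part_eq_0_iff)
  define H where "H = antideriv g"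
  have dY_q: "dY q = - smult (X^2) (dX g)"
    using cocycle by (simp add: cocycle_iff f dX_smult pderiv_pCons power2_eq_square
        one_pCons[symmetric] smult_add_right)
  define r where "r = q + smult (X^2) (dX H)"
  have "dY r = 0"
    by (simp add: r_def dY_add dY_smult dY_q H_def flip: dX_dY) (simp add: dY_antideriv)
  then have "r = [:coeff r 0:]" by (rule y_constant)
  also have "coeff r 0 = X^2 * s"
    by (simp add: r_def s H_def coeff_dX)
  finally have q: "q = [:X^2 * s:] - smult (X^2) (dX H)"
    by (simp add: r_def algebra_simps)
  have "d0 (H - [:antideriv s:]) = (f, q)"
    by (simp add: d0_eq H_def dY_diff dY_const dY_antideriv f q dX_diff dX_const
        pderiv_antideriv_complex smult_diff_right)
  then show ?thesis by (metis rangeI)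
qed

lemma h1_kernel: "{z. d1 z = 0 \<and> h1_class z = 0} = range d0"
  using zero_class_cocycle_is_coboundary d1_d0 h1_class_d0 by fastforce

theorem proposition3p2:
  shows "cohom_iso scA (*) {f. d0 f = 0} {0} (UNIV :: complex set) \<and>
         cohom_iso scA2 scP2 {p. d1 p = 0} (range d0)
           {(p, q). degree (q :: complex poly) \<le> 1} \<and>
         cohom_iso scA smult UNIV (range d1) (UNIV :: complex poly set)"
proof (intro conjI)
  show "cohom_iso scA (*) {f. d0 f = 0} {0} (UNIV :: complex set)"
    unfolding cohom_iso_def d0_kernel
    by (intro exI[of _ "\<lambda>f. coeff (coeff f 0) 0"]) (auto simp: scA_def image_iff)
  show "cohom_iso scA2 scP2 {p. d1 p = 0} (range d0) {(p, q). degree (q :: complex poly) \<le> 1}"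
    unfolding cohom_iso_def
    by (intro exI[of _ h1_class]) (simp add: h1_class_add h1_class_scA2 h1_class_cocycles h1_kernel)
  have "range at_x0 = UNIV"
    by (metis at_x0_lift_y surjI)
  then show "cohom_iso scA smult UNIV (range d1) (UNIV :: complex poly set)"
    unfolding cohom_iso_def d1_image
    by (intro exI[of _ at_x0]) (simp add: at_x0_add at_x0_smult_const scA_def)
qed

end
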